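(* Let $x\in\{\text{stage},\text{stage2},\text{CF2}\}$ and let $\sigma_x^{\cap}$ be the skeptical mode of $\sigma_x$. Then there exist argumentation frameworks $AF=(AR,Attacks)$ and $AF'=(AR',Attacks')$ with $AF\preceq_N AF'$ such that the following statement does NOT hold: $$\forall E\in\sigma_x^{\cap}(AF)\ \exists E'\in\sigma_x^{\cap}(AF') \text{ such that } (E'\not\subseteq AR\ \lor\ E'=E).$$
   Context: An argumentation framework is a pair $AF=(AR,Attacks)$ with $AR$ a finite set and $Attacks\subseteq AR\times AR$; $a$ attacks $b$ iff $(a,b)\in Attacks$; a set $S$ attacks $b$ iff some element of $S$ attacks $b$. An argumentation semantics $\sigma$ assigns to each $AF$ a set $\sigma(AF)$ of subsets of $AR$. $AF\preceq_N AF'$ (normal expansion) iff $AR\subseteq AR'$, $Attacks\subseteq Attacks'$ and no $(a,b)\in Attacks'\setminus Attacks$ has $a,b\in AR$. Skeptical mode: $\sigma^{\cap}(AF)=\{\bigcap_{E\in\sigma(AF)}E\}$. $S\subseteq AR$ is conflict-free iff no element of $S$ attacks an element of $S$. $S^+=\{b: \text{some } a\in S \text{ attacks } b\}$. A naive extension is a $\subseteq$-maximal conflict-free set. A stage extension is a conflict-free $S$ such that no conflict-free $S'$ has $S'\cup S'^+\supsetneq S\cup S^+$. Attack sequence: $\langle a_1,\dots,a_n\rangle$ of pairwise distinct arguments with $(a_i,a_{i+1})\in Attacks$; $b$ is reachable from $a$ iff such a sequence has $a_1=a$, $a_n=b$. The strongly connected components (SCCs) of $AF$ are the maximal sets of mutually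 reachable arguments; $SCCS_{AF}$ is the set of them. For $S\subseteq AR$, the restriction $AF\downarrow_S=(S, Attacks\cap(S\times S))$. For an SCC $S$ and $E\subseteq AR$: $S^-_{out}=\{a\notin S: a \text{ attacks some element of } S\}$; $D_{AF}(S,E)=\{a\in S: E\cap S^-_{out} \text{ attacks } a\}$; $P_{AF}(S,E)=\{a\in S: E\cap S^-_{out}\text{ does not attack } a \text{ and } \exists b\in S^-_{out} \text{ attacking } a \text{ such that } E \text{ does not attack } b\}$; $U_{AF}(S,E)=S\setminus(D_{AF}(S,E)\cup P_{AF}(S,E))$; $UP_{AF}(S,E)=U_{AF}(S,E)\cup P_{AF}(S,E)$. CF2: $E\subseteq AR$ is a CF2 extension of $AF$ iff either $|SCCS_{AF}|=1$ and $E$ is a naive extension of $AF$, or $|SCCS_{AF}|>1$ and for every $S\in SCCS_{AF}$, $E\cap S$ is a CF2 extension of $AF\downarrow_{UP_{AF}(S,E)}$. Stage2 is defined identically with "naive extension" replaced by "stage extension". $\sigma_x(AF)$ denotes the set of all $x$-extensions. *)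

theory Defs
  imports Main
begin

definition AF :: "'a set \<Rightarrow> ('a \<times> 'a) set \<Rightarrow> bool" where
  "AF AR Att \<longleftrightarrow> finite AR \<and> Att \<subseteq> AR \<times> AR"

definition attacks_set :: "('a \<times> 'a) set \<Rightarrow> 'a set \<Rightarrow> 'a \<Rightarrow> bool" where
  "attacks_set Att S b \<longleftrightarrow> (\<exists>a\<in>S. (a, b) \<in> Att)"

definition conflict_free :: "'a set \<Rightarrow> ('a \<times> 'a) set \<Rightarrow> 'a set \<Rightarrow> bool" where
  "conflict_free AR Att S \<longleftrightarrow> S \<subseteq> AR \<and> (\<forall>a\<in>S. \<forall>b\<in>S. (a, b) \<notin> Att)"

definition plus :: "('a \<times> 'a) set \<Rightarrow> 'a set \<Rightarrow> 'a set" where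
  "plus Att S = {b. attacks_set Att S b}"

definition naive :: "'a set \<Rightarrow> ('a \<times> 'a) set \<Rightarrow> 'a set set" where
  "naive AR Att = {S. conflict_free AR Att S \<and>
      (\<forall>S'. conflict_free AR Att S' \<and> S \<subseteq> S' \<longrightarrow> S' = S)}"

definition stage :: "'a set \<Rightarrow> ('a \<times> 'a) set \<Rightarrow> 'a set set" where
  "stage AR Att = {S. conflict_free AR Att S \<and>
      \<not> (\<exists>S'. conflict_free AR Att S' \<and> S' \<union> plus Att S' \<supset> S \<union> plus Att S)}"

definition reachable :: "'a set \<Rightarrow> ('a \<times> 'a) set \<Rightarrow> 'a \<Rightarrow> 'a \<Rightarrow> bool" where
  "reachable AR Att a b \<longleftrightarrow> (\<exists>xs. xs \<noteq> [] \<and> distinct xs \<and> set xs \<subseteq> AR \<and>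
      hd xs = a \<and> last xs = b \<and> (\<forall>i. Suc i < length xs \<longrightarrow> (xs ! i, xs ! Suc i) \<in> Att))"

definition SCCS :: "'a set \<Rightarrow> ('a \<times> 'a) set \<Rightarrow> 'a set set" where
  "SCCS AR Att = {S. \<exists>a\<in>AR. S = {b\<in>AR. reachable AR Att a b \<and> reachable AR Att b a}}"

definition restr :: "('a \<times> 'a) set \<Rightarrow> 'a set \<Rightarrow> ('a \<times> 'a) set" where
  "restr Att S = Att \<inter> (S \<times> S)"

definition out_minus :: "'a set \<Rightarrow> ('a \<times> 'a) set \<Rightarrow> 'a set \<Rightarrow> 'a set" where
  "out_minus AR Att S = {a\<in>AR. a \<notin> S \<and> (\<exists>b\<in>S. (a, b) \<in> Att)}"

definition Dset :: "'a set \<Rightarrow> ('a \<times> 'a) set \<Rightarrow> 'a set \<Rightarrow> 'a set \<Rightarrow> 'a set" where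
  "Dset AR Att S E = {a\<in>S. attacks_set Att (E \<inter> out_minus AR Att S) a}"

definition Pset :: "'a set \<Rightarrow> ('a \<times> 'a) set \<Rightarrow> 'a set \<Rightarrow> 'a set \<Rightarrow> 'a set" where
  "Pset AR Att S E = {a\<in>S. \<not> attacks_set Att (E \<inter> out_minus AR Att S) a \<and>
      (\<exists>b\<in>out_minus AR Att S. (b, a) \<in> Att \<and> \<not> attacks_set Att E b)}"

definition Uset :: "'a set \<Rightarrow> ('a \<times> 'a) set \<Rightarrow> 'a set \<Rightarrow> 'a set \<Rightarrow> 'a set" where
  "Uset AR Att S E = S - (Dset AR Att S E \<union> Pset AR Att S E)"

definition UPset :: "'a set \<Rightarrow> ('a \<times> 'a) set \<Rightarrow> 'a set \<Rightarrow> 'a set \<Rightarrow> 'a set" where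
  "UPset AR Att S E = Uset AR Att S E \<union> Pset AR Att S E"

text \<open>SCC-recursive scheme over a base semantics (naive gives CF2, stage gives stage2).
  The recursion is well-founded since UP(S,E) is a subset of S, a proper subset of AR.\<close>
inductive scc_rec :: "('a set \<Rightarrow> ('a \<times> 'a) set \<Rightarrow> 'a set set) \<Rightarrow> 'a set \<Rightarrow> ('a \<times> 'a) set \<Rightarrow> 'a set \<Rightarrow> bool"
  for base where
  base: "card (SCCS AR Att) = 1 \<Longrightarrow> E \<in> base AR Att \<Longrightarrow> scc_rec base AR Att E"
| recur: "card (SCCS AR Att) \<noteq> 1 \<Longrightarrow> E \<subseteq> AR \<Longrightarrow>
     (\<forall>S\<in>SCCS AR Att. scc_rec base (UPset AR Att S E) (restr Att (UPset AR Att S E)) (E \<inter> S))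
     \<Longrightarrow> scc_rec base AR Att E"

definition cf2 :: "'a set \<Rightarrow> ('a \<times> 'a) set \<Rightarrow> 'a set set" where
  "cf2 AR Att = {E. scc_rec naive AR Att E}"

definition stage2 :: "'a set \<Rightarrow> ('a \<times> 'a) set \<Rightarrow> 'a set set" where
  "stage2 AR Att = {E. scc_rec stage AR Att E}"

definition skeptical :: "('a set \<Rightarrow> ('a \<times> 'a) set \<Rightarrow> 'a set set) \<Rightarrow> 'a set \<Rightarrow> ('a \<times> 'a) set \<Rightarrow> 'a set set" where
  "skeptical \<sigma> AR Att = {\<Inter> (\<sigma> AR Att)}"

definition normal_expansion :: "'a set \<Rightarrow> ('a \<times> 'a) set \<Rightarrow> 'a set \<Rightarrow> ('a \<times> 'a) set \<Rightarrow> bool" where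
  "normal_expansion AR Att AR' Att' \<longleftrightarrow> AR \<subseteq> AR' \<and> Att \<subseteq> Att' \<and>
     (\<forall>(a, b) \<in> Att' - Att. \<not> (a \<in> AR \<and> b \<in> AR))"

end

theory Submission
  imports Defs
begin

text \<open>Take AF = ({a}, {}) and expand it normally by b and c with b, c attacking each other and
  b attacking a. In AF' both {b} and {a, c} are stable, hence stage, stage2 and CF2 extensions
  (the SCC {b, c} is unattacked, and the SCC {a} is either defeated by b or left alone), so the
  skeptical extension of AF' is empty, while that of AF is {a}. The empty set is contained in the
  old arguments and differs from {a}.\<close>

definition stable_extensions :: "'a set \<Rightarrow> ('a \<times> 'a) set \<Rightarrow> 'a set set" where
  "stable_extensions AR Att = {S. conflict_free AR Att S \<and> AR - S \<subseteq> plus Att S}"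

lemma stable_extensions_subset_naive: "stable_extensions AR Att \<subseteq> naive AR Att"
  unfolding stable_extensions_def naive_def conflict_free_def plus_def attacks_set_def by blast

lemma stable_extensions_subset_stage:
  assumes "Att \<subseteq> AR \<times> AR"
  shows "stable_extensions AR Att \<subseteq> stage AR Att"
proof -
  have "S' \<union> plus Att S' \<subseteq> AR" if "conflict_free AR Att S'" for S'
    using that assms unfolding conflict_free_def plus_def attacks_set_def by blast
  then show ?thesis
    unfolding stable_extensions_def stage_def by blast
qed

lemma naive_no_attacks: "naive AR {} = {AR}"
  unfolding naive_def conflict_free_def by auto

lemma stage_no_attacks: "stage AR {} = {AR}"
  unfolding stage_def conflict_free_def plus_def attacks_set_def by auto

lemma stable_extensions_mutual_attack:
  assumes "a \<noteq> b"
  shows "{a} \<in> stable_extensions {a, b} {(a, b), (b, a)}"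
  using assms unfolding stable_extensions_def conflict_free_def plus_def attacks_set_def by auto

lemma stable_extensions_counterexample:
  assumes "a \<noteq> b" "a \<noteq> c" "b \<noteq> c"
  shows "{b} \<in> stable_extensions {a, b, c} {(b, c), (c, b), (b, a)}"
    and "{a, c} \<in> stable_extensions {a, b, c} {(b, c), (c, b), (b, a)}"
  using assms unfolding stable_extensions_def conflict_free_def plus_def attacks_set_def by auto

lemma reachable_refl: "a \<in> AR \<Longrightarrow> reachable AR Att a a"
  unfolding reachable_def by (rule exI[of _ "[a]"]) auto

lemma reachable_attack:
  "a \<in> AR \<Longrightarrow> b \<in> AR \<Longrightarrow> a \<noteq> b \<Longrightarrow> (a, b) \<in> Att \<Longrightarrow> reachable AR Att a b"
  unfolding reachable_def by (rule exI[of _ "[a, b]"]) auto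

lemma reachable_from_non_attacker:
  assumes "\<forall>x. (a, x) \<notin> Att" and "reachable AR Att a b"
  shows "b = a"
proof (rule ccontr)
  assume "b \<noteq> a"
  from assms(2) obtain xs where xs: "xs \<noteq> []" "hd xs = a" "last xs = b"
    and steps: "\<forall>i. Suc i < length xs \<longrightarrow> (xs ! i, xs ! Suc i) \<in> Att"
    unfolding reachable_def by blast
  have "Suc 0 < length xs"
    using xs \<open>b \<noteq> a\<close> by (cases xs) auto
  with steps have "(xs ! 0, xs ! 1) \<in> Att" by auto
  with xs assms(1) show False
    by (simp add: hd_conv_nth)
qed

lemma SCCS_strongly_connected:
  assumes "AR \<noteq> {}" and "\<forall>x\<in>AR. \<forall>y\<in>AR. reachable AR Att x y"
  shows "SCCS AR Att = {AR}"
  using assms unfolding SCCS_def by auto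

lemma SCCS_singleton: "SCCS {a} Att = {{a}}"
  by (rule SCCS_strongly_connected) (auto intro: reachable_refl)

lemma SCCS_mutual_attack:
  assumes "a \<noteq> b"
  shows "SCCS {a, b} {(a, b), (b, a)} = {{a, b}}"
  using assms by (intro SCCS_strongly_connected) (auto intro: reachable_refl reachable_attack)

lemma SCCS_counterexample:
  assumes "a \<noteq> b" "a \<noteq> c" "b \<noteq> c"
  shows "SCCS {a, b, c} {(b, c), (c, b), (b, a)} = {{a}, {b, c}}"
proof -
  let ?AR = "{a, b, c}" and ?Att = "{(b, c), (c, b), (b, a)}"
  let ?component = "\<lambda>y. {x \<in> ?AR. reachable ?AR ?Att y x \<and> reachable ?AR ?Att x y}"
  have a_attacks_nothing: "\<forall>x. (a, x) \<notin> ?Att"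
    using assms by auto
  have from_a: "reachable ?AR ?Att a x \<longleftrightarrow> x = a" for x
    using reachable_refl[of a ?AR ?Att] reachable_from_non_attacker[OF a_attacks_nothing, of ?AR x]
    by blast
  have bc: "reachable ?AR ?Att x y" if "x \<in> {b, c}" "y \<in> {b, c}" for x y
    using that assms by (auto intro: reachable_refl reachable_attack)
  have "?component a = {a}"
    using from_a by auto
  moreover have "?component b = {b, c}" "?component c = {b, c}"
    using bc from_a assms by auto
  moreover have "SCCS ?AR ?Att = ?component ` ?AR"
    unfolding SCCS_def by blast
  ultimately show ?thesis
    by simp
qed

lemma UPset_eq_Diff_Dset: "UPset AR Att S E = S - Dset AR Att S E"
  unfolding UPset_def Uset_def Pset_def Dset_def by auto

lemma scc_rec_one_SCC_iff:
  "card (SCCS AR Att) = 1 \<Longrightarrow> scc_rec base AR Att E \<longleftrightarrow> E \<in> base AR Att"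
  by (auto elim: scc_rec.cases intro: scc_rec.base)

lemma scc_rec_empty: "scc_rec base {} Att {}"
  by (rule scc_rec.recur) (auto simp: SCCS_def)

lemma cf2_singleton: "cf2 {a} Att = naive {a} Att"
  by (simp add: cf2_def scc_rec_one_SCC_iff SCCS_singleton)

lemma stage2_singleton: "stage2 {a} Att = stage {a} Att"
  by (simp add: stage2_def scc_rec_one_SCC_iff SCCS_singleton)

lemma scc_rec_counterexample:
  assumes "a \<noteq> b" "a \<noteq> c" "b \<noteq> c"
    and stable_base: "\<And>AR Att. Att \<subseteq> AR \<times> AR \<Longrightarrow> stable_extensions AR Att \<subseteq> base AR Att"
  shows "scc_rec base {a, b, c} {(b, c), (c, b), (b, a)} {b}"
    and "scc_rec base {a, b, c} {(b, c), (c, b), (b, a)} {a, c}"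
proof -
  let ?AR = "{a, b, c}" and ?Att = "{(b, c), (c, b), (b, a)}" and ?Att\<^sub>b\<^sub>c = "{(b, c), (c, b)}"
  have SCCS: "SCCS ?AR ?Att = {{a}, {b, c}}" and "card (SCCS ?AR ?Att) \<noteq> 1"
    using SCCS_counterexample[OF assms(1-3)] assms by auto
  have restr: "restr ?Att {b, c} = ?Att\<^sub>b\<^sub>c" "restr ?Att {a} = {}" "restr ?Att {} = {}"
    using assms unfolding restr_def by auto
  have UP_bc: "UPset ?AR ?Att {b, c} E = {b, c}" for E
    using assms unfolding UPset_eq_Diff_Dset Dset_def out_minus_def attacks_set_def by auto
  have UP_a: "UPset ?AR ?Att {a} {b} = {}" "UPset ?AR ?Att {a} {a, c} = {a}"
    using assms unfolding UPset_eq_Diff_Dset Dset_def out_minus_def attacks_set_def by auto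
  have "stable_extensions {b, c} ?Att\<^sub>b\<^sub>c \<subseteq> base {b, c} ?Att\<^sub>b\<^sub>c"
    by (rule stable_base) auto
  then have base_bc: "scc_rec base {b, c} ?Att\<^sub>b\<^sub>c {b}" "scc_rec base {b, c} ?Att\<^sub>b\<^sub>c {c}"
    using \<open>b \<noteq> c\<close> stable_extensions_mutual_attack[of b c] stable_extensions_mutual_attack[of c b]
    by (auto simp: scc_rec_one_SCC_iff SCCS_mutual_attack insert_commute)
  have "{a} \<in> stable_extensions {a} {}"
    unfolding stable_extensions_def conflict_free_def by simp
  moreover have "stable_extensions {a} {} \<subseteq> base {a} {}"
    by (rule stable_base) simp
  ultimately have base_a: "scc_rec base {a} {} {a}"
    by (auto simp: scc_rec_one_SCC_iff SCCS_singleton)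
  show "scc_rec base ?AR ?Att {b}"
  proof (rule scc_rec.recur)
    have "{b} \<inter> {b, c} = {b}" "{b} \<inter> {a} = {}"
      using assms(1) by auto
    then show "\<forall>S\<in>SCCS ?AR ?Att. scc_rec base (UPset ?AR ?Att S {b})
        (restr ?Att (UPset ?AR ?Att S {b})) ({b} \<inter> S)"
      by (simp add: SCCS UP_bc UP_a restr base_bc scc_rec_empty)
  qed (use \<open>card (SCCS ?AR ?Att) \<noteq> 1\<close> in auto)
  show "scc_rec base ?AR ?Att {a, c}"
  proof (rule scc_rec.recur)
    have "{a, c} \<inter> {b, c} = {c}" "{a, c} \<inter> {a} = {a}"
      using assms(1-3) by auto
    then show "\<forall>S\<in>SCCS ?AR ?Att. scc_rec base (UPset ?AR ?Att S {a, c})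
        (restr ?Att (UPset ?AR ?Att S {a, c})) ({a, c} \<inter> S)"
      by (simp add: SCCS UP_bc UP_a restr base_bc base_a)
  qed (use \<open>card (SCCS ?AR ?Att) \<noteq> 1\<close> in auto)
qed

lemma skeptical_not_preserved_by_counterexample:
  fixes \<sigma> :: "'a set \<Rightarrow> ('a \<times> 'a) set \<Rightarrow> 'a set set"
  assumes "b \<noteq> a" "b \<noteq> c"
    and "\<sigma> {a} {} = {{a}}"
    and "{b} \<in> \<sigma> {a, b, c} {(b, c), (c, b), (b, a)}" "{a, c} \<in> \<sigma> {a, b, c} {(b, c), (c, b), (b, a)}"
  shows "AF {a} {} \<and> AF {a, b, c} {(b, c), (c, b), (b, a)} \<and>
    normal_expansion {a} {} {a, b, c} {(b, c), (c, b), (b, a)} \<and>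
    \<not> (\<forall>E \<in> skeptical \<sigma> {a} {}. \<exists>E' \<in> skeptical \<sigma> {a, b, c} {(b, c), (c, b), (b, a)}.
        (\<not> E' \<subseteq> {a} \<or> E' = E))"
proof -
  have "\<Inter> (\<sigma> {a, b, c} {(b, c), (c, b), (b, a)}) = {}"
    using assms(1,2,4,5) by blast
  then show ?thesis
    using assms(1,3) by (auto simp: AF_def normal_expansion_def skeptical_def)
qed

theorem proposition38:
  shows "\<forall>\<sigma> \<in> {stage, stage2, cf2}. \<exists>(AR :: nat set) Att AR' Att'.
     AF AR Att \<and> AF AR' Att' \<and> normal_expansion AR Att AR' Att' \<and>
     \<not> (\<forall>E \<in> skeptical \<sigma> AR Att. \<exists>E' \<in> skeptical \<sigma> AR' Att'. (\<not> E' \<subseteq> AR \<or> E' = E))"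
proof
  fix \<sigma> :: "nat set \<Rightarrow> (nat \<times> nat) set \<Rightarrow> nat set set"
  let ?AR' = "{0, 1, 2 :: nat}" and ?Att' = "{(1, 2), (2, 1), (1, 0 :: nat)}"
  assume "\<sigma> \<in> {stage, stage2, cf2}"
  then consider "\<sigma> = stage" | "\<sigma> = stage2" | "\<sigma> = cf2"
    by blast
  then have extensions: "\<sigma> {0} {} = {{0}} \<and> {1} \<in> \<sigma> ?AR' ?Att' \<and> {0, 2} \<in> \<sigma> ?AR' ?Att'"
  proof cases
    case 1
    have "stable_extensions ?AR' ?Att' \<subseteq> stage ?AR' ?Att'"
      by (rule stable_extensions_subset_stage) auto
    with 1 show ?thesis
      using stable_extensions_counterexample[of "0::nat" 1 2] by (auto simp: stage_no_attacks)
  next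
    case 2
    then show ?thesis
      using scc_rec_counterexample[of "0::nat" 1 2 stage, OF _ _ _ stable_extensions_subset_stage]
        stage2_singleton[of 0 "{}"]
      by (simp add: stage2_def stage_no_attacks)
  next
    case 3
    then show ?thesis
      using scc_rec_counterexample[of "0::nat" 1 2 naive, OF _ _ _ stable_extensions_subset_naive]
        cf2_singleton[of 0 "{}"]
      by (simp add: cf2_def naive_no_attacks)
  qed
  show "\<exists>(AR :: nat set) Att AR' Att'.
     AF AR Att \<and> AF AR' Att' \<and> normal_expansion AR Att AR' Att' \<and>
     \<not> (\<forall>E \<in> skeptical \<sigma> AR Att. \<exists>E' \<in> skeptical \<sigma> AR' Att'. (\<not> E' \<subseteq> AR \<or> E' = E))"
    by (intro exI, rule skeptical_not_preserved_by_counterexample[of 1 0 2 \<sigma>])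
      (use extensions in auto)
qed

end
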